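(* For all integers $\ell\ge 3$ and $n\ge 1$, $$\ell n-2\ell-1\le f_\ell(n,1)\le \ell n-\ell+1.$$
   Context: $f_\ell(n,1)$ denotes the clique number of the xor-product of $\ell$ copies of the complete graph $K_n$. The xor-product $G\cdot H$ of graphs $G,H$ has vertex set $V(G)\times V(H)$, and $(g,h)$, $(g',h')$ are adjacent iff exactly one of the following holds: $gg'\in E(G)$, $hh'\in E(H)$; the xor-product of several graphs is formed iteratively (the operation is associative: two tuples are adjacent iff they are adjacent in an odd number of coordinates). *)

theory Defs
  imports Main
begin

text \<open>Vertices of the xor-product of l copies of K_n: tuples of length l
  with entries in {0..<n}, represented as lists.\<close>
definition xor_vertices :: "nat \<Rightarrow> nat \<Rightarrow> nat list set" where
  "xor_vertices l n = {xs. length xs = l \<and> set xs \<subseteq> {0..<n}}"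

text \<open>Two tuples are adjacent iff they are adjacent (i.e. differ, since K_n is
  complete) in an odd number of coordinates.\<close>
definition xor_adj :: "nat list \<Rightarrow> nat list \<Rightarrow> bool" where
  "xor_adj xs ys = odd (card {i. i < length xs \<and> xs ! i \<noteq> ys ! i})"

definition xor_clique :: "nat \<Rightarrow> nat \<Rightarrow> nat list set \<Rightarrow> bool" where
  "xor_clique l n C \<longleftrightarrow> C \<subseteq> xor_vertices l n \<and>
     (\<forall>x\<in>C. \<forall>y\<in>C. x \<noteq> y \<longrightarrow> xor_adj x y)"

text \<open>f_l(n,1): the clique number of the xor-product of l copies of K_n.\<close>
definition f_xor :: "nat \<Rightarrow> nat \<Rightarrow> nat" where
  "f_xor l n = Max (card ` {C. xor_clique l n C})"

end

theory Submission
  imports Defs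
begin

text \<open>
  Upper bound: identify a tuple x with its set of cells \<open>(i, x!i)\<close> in the \<open>l \<times> n\<close> grid, and a
  set S of tuples with the GF(2)-sum of these indicator vectors. Two distinct clique members
  share a number of cells of parity \<open>l + 1\<close>, so pairing this sum with the cells of a clique member y
  recovers whether \<open>y \<in> S\<close>; every row of the sum has parity \<open>|S|\<close>. Hence the \<open>2^|C|\<close> subsets of a
  clique C have distinct sums, and these sums are already determined by their entries outside the
  cells \<open>(i, 0)\<close>, \<open>1 \<le> i < l\<close>. So \<open>|C| \<le> ln - l + 1\<close>.

  Lower bound: with \<open>L = l - 1\<close>, take the staircase tuples \<open>(1,\<dots>,1, a, 0,\<dots>,0, i mod 2)\<close> with
  the entry \<open>a \<ge> 2\<close> in position \<open>i < L\<close>, together with the tuples \<open>(y 0, \<dots>, y (L - 1), c)\<close>, \<open>c \<ge> 2\<close>, for a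
  suitable almost alternating 0/1 sequence y; at most one staircase tuple has to be dropped.
\<close>

definition cells :: "nat list \<Rightarrow> (nat \<times> nat) set" where
  "cells x = (\<lambda>i. (i, x ! i)) ` {..<length x}"

text \<open>The sum over GF(2) of the indicator vectors of the cells of the tuples in S.\<close>
definition odd_cover :: "nat list set \<Rightarrow> (nat \<times> nat) set" where
  "odd_cover S = {p. odd (card {x\<in>S. p \<in> cells x})}"

lemma finite_xor_vertices: "finite (xor_vertices l n)"
proof -
  have "xor_vertices l n = {xs. set xs \<subseteq> {0..<n} \<and> length xs = l}"
    by (auto simp: xor_vertices_def)
  then show ?thesis
    using finite_lists_length_eq[of "{0..<n}" l] by simp
qed

lemma xor_clique_finite: "xor_clique l n C \<Longrightarrow> finite C"
  using finite_xor_vertices by (auto simp: xor_clique_def intro: finite_subset)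

lemma finite_cells [simp]: "finite (cells x)"
  by (simp add: cells_def)

lemma cells_subset_grid: "x \<in> xor_vertices l n \<Longrightarrow> cells x \<subseteq> {..<l} \<times> {..<n}"
  by (auto simp: cells_def xor_vertices_def dest: nth_mem)

lemma odd_cover_subset_grid:
  "S \<subseteq> xor_vertices l n \<Longrightarrow> odd_cover S \<subseteq> {..<l} \<times> {..<n}"
proof
  fix p assume "S \<subseteq> xor_vertices l n" "p \<in> odd_cover S"
  then have "card {x\<in>S. p \<in> cells x} \<noteq> 0"
    using odd_pos by (auto simp: odd_cover_def)
  then obtain x where "x \<in> S" "p \<in> cells x"
    by (metis (mono_tags, lifting) card.empty empty_Collect_eq)
  with \<open>S \<subseteq> xor_vertices l n\<close> show "p \<in> {..<l} \<times> {..<n}"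
    using cells_subset_grid by blast
qed

lemma odd_card_odd_cover_Int:
  assumes "finite A" "finite S"
  shows "odd (card (odd_cover S \<inter> A)) \<longleftrightarrow> odd (\<Sum>x\<in>S. card (cells x \<inter> A))"
proof -
  have "odd_cover S \<inter> A = {p\<in>A. odd (card {x\<in>S. p \<in> cells x})}"
    by (auto simp: odd_cover_def)
  then have "odd (card (odd_cover S \<inter> A)) \<longleftrightarrow> odd (\<Sum>p\<in>A. card {x\<in>S. p \<in> cells x})"
    using even_sum_iff[OF assms(1), of "\<lambda>p. card {x\<in>S. p \<in> cells x}"] by simp
  also have "(\<Sum>p\<in>A. card {x\<in>S. p \<in> cells x}) = (\<Sum>x\<in>S. card {p\<in>A. p \<in> cells x})"
    by (rule sum_multicount_gen[OF assms]) simp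
  also have "\<dots> = (\<Sum>x\<in>S. card (cells x \<inter> A))"
    by (intro sum.cong arg_cong[where f = card]) auto
  finally show ?thesis .
qed

lemma card_cells_Int_row:
  assumes "x \<in> xor_vertices l n" "i < l"
  shows "card (cells x \<inter> {i} \<times> {..<n}) = 1"
proof -
  have "(i, x ! i) \<in> {..<l} \<times> {..<n}"
    using assms cells_subset_grid by (force simp: cells_def xor_vertices_def)
  then have "cells x \<inter> {i} \<times> {..<n} = {(i, x ! i)}"
    using assms by (auto simp: cells_def xor_vertices_def)
  then show ?thesis by simp
qed

lemma card_cells_Int_cells:
  assumes "length x = length y"
  shows "card (cells x \<inter> cells y) = card {i. i < length x \<and> x ! i = y ! i}"
proof -
  have "cells x \<inter> cells y = (\<lambda>i. (i, x ! i)) ` {i. i < length x \<and> x ! i = y ! i}"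
    using assms by (auto simp: cells_def)
  moreover have "inj_on (\<lambda>i. (i, x ! i)) A" for A
    by (auto intro: inj_onI)
  ultimately show ?thesis
    by (simp only: card_image)
qed

lemma xor_adj_imp_agreements_parity:
  assumes "length x = length y" "xor_adj x y"
  shows "odd (card {i. i < length x \<and> x ! i = y ! i}) \<longleftrightarrow> even (length x)"
proof -
  have "{i. i < length x \<and> x ! i = y ! i} \<union> {i. i < length x \<and> x ! i \<noteq> y ! i} = {..<length x}"
    by auto
  then have "card {i. i < length x \<and> x ! i = y ! i} + card {i. i < length x \<and> x ! i \<noteq> y ! i}
      = length x"
    by (subst card_Un_disjoint[symmetric]) auto
  then show ?thesis
    using assms(2) by (simp add: xor_adj_def) presburger
qed

lemma odd_cover_row_parity:
  assumes "S \<subseteq> xor_vertices l n" "finite S" "i < l"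
  shows "odd (card (odd_cover S \<inter> {i} \<times> {..<n})) \<longleftrightarrow> odd (card S)"
proof -
  have "(\<Sum>x\<in>S. card (cells x \<inter> {i} \<times> {..<n})) = (\<Sum>x\<in>S. 1)"
    using assms card_cells_Int_row by (intro sum.cong) auto
  then have "(\<Sum>x\<in>S. card (cells x \<inter> {i} \<times> {..<n})) = card S"
    by simp
  then show ?thesis
    using odd_card_odd_cover_Int[OF _ assms(2)] by simp
qed

lemma odd_cover_cells_parity:
  assumes C: "xor_clique l n C" and "S \<subseteq> C" "y \<in> C"
  shows "odd (card (odd_cover S \<inter> cells y)) \<longleftrightarrow> (y \<in> S) \<noteq> (odd (card S) \<and> even l)"
proof -
  have fS: "finite S"
    using assms xor_clique_finite finite_subset by blast
  have len: "length x = l" if "x \<in> C" for x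
    using C that by (auto simp: xor_clique_def xor_vertices_def)
  have term_parity: "even (card (cells x \<inter> cells y) + (l + 1) + (if x = y then 1 else 0))"
    if "x \<in> S" for x
  proof (cases "x = y")
    case True
    then show ?thesis
      using card_cells_Int_cells[of y y] len \<open>y \<in> C\<close> by simp
  next
    case False
    then have "xor_adj x y"
      using assms that by (auto simp: xor_clique_def)
    then show ?thesis
      using False xor_adj_imp_agreements_parity[of x y] card_cells_Int_cells[of x y]
        len \<open>y \<in> C\<close> \<open>S \<subseteq> C\<close> that by auto
  qed
  have "(\<Sum>x\<in>S. card (cells x \<inter> cells y) + (l + 1) + (if x = y then 1 else 0))
      = (\<Sum>x\<in>S. card (cells x \<inter> cells y)) + card S * (l + 1) + (if y \<in> S then 1 else 0)"
    using fS by (simp only: sum.distrib sum.delta[OF fS]) simp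
  moreover have "even (\<Sum>x\<in>S. card (cells x \<inter> cells y) + (l + 1) + (if x = y then 1 else 0))"
    using term_parity by (intro dvd_sum) auto
  ultimately have "even ((\<Sum>x\<in>S. card (cells x \<inter> cells y)) + card S * (l + 1) + (if y \<in> S then 1 else 0))"
    by metis
  then show ?thesis
    using odd_card_odd_cover_Int[OF finite_cells fS, of y] by (cases "y \<in> S") auto
qed

lemma inj_on_odd_cover:
  assumes C: "xor_clique l n C" and "0 < l"
  shows "inj_on odd_cover (Pow C)"
proof (rule inj_onI)
  fix S T assume "S \<in> Pow C" "T \<in> Pow C" and eq: "odd_cover S = odd_cover T"
  then have "S \<subseteq> C" "T \<subseteq> C" by auto
  have row0: "odd (card (odd_cover X \<inter> {0} \<times> {..<n})) \<longleftrightarrow> odd (card X)" if "X \<subseteq> C" for X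
    using C that \<open>0 < l\<close> xor_clique_finite[OF C] finite_subset
    by (intro odd_cover_row_parity) (auto simp: xor_clique_def)
  have "odd (card S) \<longleftrightarrow> odd (card T)"
    using row0[OF \<open>S \<subseteq> C\<close>] row0[OF \<open>T \<subseteq> C\<close>] eq by simp
  then have "y \<in> S \<longleftrightarrow> y \<in> T" if "y \<in> C" for y
    using odd_cover_cells_parity[OF C \<open>S \<subseteq> C\<close> that] odd_cover_cells_parity[OF C \<open>T \<subseteq> C\<close> that] eq
    by auto
  with \<open>S \<subseteq> C\<close> \<open>T \<subseteq> C\<close> show "S = T" by blast
qed

text \<open>Rows i and 0 of an odd cover have the same parity, so the entry \<open>(i, 0)\<close> can be read off
  from the remaining entries of these two rows.\<close>
lemma odd_cover_eq_if_eq_off_column: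
  assumes C: "xor_clique l n C" and "S \<subseteq> C" "T \<subseteq> C" "0 < n"
    and eq: "odd_cover S - {1..<l} \<times> {0} = odd_cover T - {1..<l} \<times> {0}"
  shows "odd_cover S = odd_cover T"
proof -
  let ?P = "{1..<l} \<times> {0}"
  have column_entry: "(i, 0) \<in> odd_cover X \<longleftrightarrow>
      odd (card ((odd_cover X - ?P) \<inter> {i} \<times> {..<n})) \<noteq> odd (card ((odd_cover X - ?P) \<inter> {0} \<times> {..<n}))"
    if "X \<subseteq> C" "1 \<le> i" "i < l" for X i
  proof -
    let ?A = "odd_cover X"
    have "X \<subseteq> xor_vertices l n" "finite X"
      using C \<open>X \<subseteq> C\<close> xor_clique_finite[OF C] finite_subset by (auto simp: xor_clique_def)
    then have rows: "odd (card (?A \<inter> {i} \<times> {..<n})) \<longleftrightarrow> odd (card (?A \<inter> {0} \<times> {..<n}))"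
      using odd_cover_row_parity that by auto
    have "?A \<inter> {0} \<times> {..<n} = (?A - ?P) \<inter> {0} \<times> {..<n}"
      by auto
    moreover have "?A \<inter> {i} \<times> {..<n} =
        (if (i, 0) \<in> ?A then insert (i, 0) else id) ((?A - ?P) \<inter> {i} \<times> {..<n})"
      using that \<open>0 < n\<close> by auto
    moreover have "finite ((?A - ?P) \<inter> {i} \<times> {..<n})"
      by simp
    ultimately show ?thesis
      using rows that by (cases "(i, 0) \<in> ?A") auto
  qed
  have "p \<in> odd_cover S \<longleftrightarrow> p \<in> odd_cover T" for p
  proof (cases "p \<in> ?P")
    case True
    then obtain i where "p = (i, 0)" "1 \<le> i" "i < l" by auto
    then show ?thesis
      using column_entry[OF \<open>S \<subseteq> C\<close>] column_entry[OF \<open>T \<subseteq> C\<close>] eq by simp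
  next
    case False
    then show ?thesis using eq by blast
  qed
  then show ?thesis by blast
qed

lemma card_xor_clique_bound:
  assumes C: "xor_clique l n C" and "0 < l" "0 < n"
  shows "card C + l \<le> l * n + 1"
proof -
  let ?P = "{1..<l} \<times> {0::nat}" and ?G = "{..<l} \<times> {..<n}"
  have inj: "inj_on (\<lambda>S. odd_cover S - ?P) (Pow C)"
  proof (rule inj_onI)
    fix S T assume "S \<in> Pow C" "T \<in> Pow C" and eq: "odd_cover S - ?P = odd_cover T - ?P"
    then have "odd_cover S = odd_cover T"
      using odd_cover_eq_if_eq_off_column[OF C _ _ \<open>0 < n\<close>] by blast
    then show "S = T"
      using inj_on_odd_cover[OF C \<open>0 < l\<close>] \<open>S \<in> Pow C\<close> \<open>T \<in> Pow C\<close> inj_onD by metis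
  qed
  have "odd_cover S - ?P \<subseteq> ?G - ?P" if "S \<subseteq> C" for S
    using C that odd_cover_subset_grid[of S l n] by (auto simp: xor_clique_def)
  then have img: "(\<lambda>S. odd_cover S - ?P) ` Pow C \<subseteq> Pow (?G - ?P)"
    by blast
  have "card (Pow C) \<le> card (Pow (?G - ?P))"
    using card_inj_on_le[OF inj img] by simp
  then have "card C \<le> card (?G - ?P)"
    using xor_clique_finite[OF C] by (simp add: card_Pow)
  moreover have "card (?G - ?P) = l * n - (l - 1)"
    using \<open>0 < n\<close> by (subst card_Diff_subset) auto
  moreover have "l \<le> l * n"
    using \<open>0 < n\<close> by simp
  ultimately show ?thesis
    by linarith
qed

definition disagreements :: "nat \<Rightarrow> (nat \<Rightarrow> nat) \<Rightarrow> (nat \<Rightarrow> nat) \<Rightarrow> nat set" where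
  "disagreements m f g = {k. k < m \<and> f k \<noteq> g k}"

lemma disagreements_commute: "disagreements m f g = disagreements m g f"
  by (auto simp: disagreements_def)

lemma xor_adj_map_upt:
  "xor_adj (map f [0..<m]) (map g [0..<m]) \<longleftrightarrow> odd (card (disagreements m f g))"
proof -
  have "{k. k < length (map f [0..<m]) \<and> map f [0..<m] ! k \<noteq> map g [0..<m] ! k} = disagreements m f g"
    by (auto simp: disagreements_def)
  then show ?thesis
    by (simp add: xor_adj_def)
qed

lemma xor_clique_image_map_upt:
  assumes range: "\<And>p k. p \<in> P \<Longrightarrow> k < m \<Longrightarrow> v p k < n"
    and odd: "\<And>p q. p \<in> P \<Longrightarrow> q \<in> P \<Longrightarrow> p \<noteq> q \<Longrightarrow> odd (card (disagreements m (v p) (v q)))"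
  shows "xor_clique m n ((\<lambda>p. map (v p) [0..<m]) ` P)"
    and "card ((\<lambda>p. map (v p) [0..<m]) ` P) = card P"
proof -
  have adj: "xor_adj (map (v p) [0..<m]) (map (v q) [0..<m])" if "p \<in> P" "q \<in> P" "p \<noteq> q" for p q
    using odd[OF that] by (simp add: xor_adj_map_upt)
  show "xor_clique m n ((\<lambda>p. map (v p) [0..<m]) ` P)"
    unfolding xor_clique_def xor_vertices_def using range adj
    by (fastforce simp: set_conv_nth)
  have "inj_on (\<lambda>p. map (v p) [0..<m]) P"
  proof (rule inj_onI, rule ccontr)
    fix p q assume "p \<in> P" "q \<in> P" and eq: "map (v p) [0..<m] = map (v q) [0..<m]" and "p \<noteq> q"
    have "xor_adj (map (v p) [0..<m]) (map (v p) [0..<m])"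
      using adj[OF \<open>p \<in> P\<close> \<open>q \<in> P\<close> \<open>p \<noteq> q\<close>] unfolding eq .
    then show False
      by (simp add: xor_adj_def)
  qed
  then show "card ((\<lambda>p. map (v p) [0..<m]) ` P) = card P"
    by (rule card_image)
qed

definition stair :: "nat \<Rightarrow> nat \<Rightarrow> nat \<Rightarrow> nat \<Rightarrow> nat" where
  "stair L i a k = (if k < i then 1 else if k = i then a else if k < L then 0 else i mod 2)"

definition spine :: "nat \<Rightarrow> (nat \<Rightarrow> nat) \<Rightarrow> nat \<Rightarrow> nat \<Rightarrow> nat" where
  "spine L y c k = (if k < L then y k else c)"

text \<open>The number of positions other than i and L at which \<open>stair L i a\<close> and \<open>spine L y c\<close> disagree.\<close>
definition spine_mismatch :: "nat \<Rightarrow> (nat \<Rightarrow> nat) \<Rightarrow> nat \<Rightarrow> nat" where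
  "spine_mismatch L y i = card {k. k < i \<and> y k \<noteq> 1} + card {k. i < k \<and> k < L \<and> y k \<noteq> 0}"

lemma odd_card_disagreements_stair_less:
  assumes "i < j" "j < L" "2 \<le> a" "2 \<le> b"
  shows "odd (card (disagreements (Suc L) (stair L i a) (stair L j b)))"
proof -
  have "disagreements (Suc L) (stair L i a) (stair L j b) =
      {i..j} \<union> {k. k = L \<and> odd (j - i)}"
    using assms by (auto simp: disagreements_def stair_def) presburger+
  moreover have "card ({i..j} \<union> {k. k = L \<and> odd (j - i)}) = Suc j - i + (if odd (j - i) then 1 else 0)"
    using assms by (subst card_Un_disjoint) auto
  ultimately show ?thesis
    using assms by simp
qed

lemma odd_card_disagreements_stair:
  assumes "(i, a) \<noteq> (j, b)" "i < L" "j < L" "2 \<le> a" "2 \<le> b"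
  shows "odd (card (disagreements (Suc L) (stair L i a) (stair L j b)))"
proof -
  consider "i < j" | "j < i" | "i = j" "a \<noteq> b"
    using assms(1) by fastforce
  then show ?thesis
  proof cases
    case 3
    then have "disagreements (Suc L) (stair L i a) (stair L j b) = {i}"
      using assms by (auto simp: disagreements_def stair_def)
    then show ?thesis by simp
  qed (use assms odd_card_disagreements_stair_less disagreements_commute in metis)+
qed

lemma odd_card_disagreements_spine:
  assumes "c \<noteq> c'"
  shows "odd (card (disagreements (Suc L) (spine L y c) (spine L y c')))"
proof -
  have "disagreements (Suc L) (spine L y c) (spine L y c') = {L}"
    using assms by (auto simp: disagreements_def spine_def)
  then show ?thesis by simp
qed

lemma odd_card_disagreements_stair_spine:
  assumes "i < L" "2 \<le> a" "2 \<le> c" "y i \<noteq> a" "odd (spine_mismatch L y i)"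
  shows "odd (card (disagreements (Suc L) (stair L i a) (spine L y c)))"
proof -
  let ?A = "{k. k < i \<and> y k \<noteq> 1}" and ?B = "{k. i < k \<and> k < L \<and> y k \<noteq> 0}"
  have "disagreements (Suc L) (stair L i a) (spine L y c) = (?A \<union> ?B) \<union> {i, L}"
    using assms by (auto simp: disagreements_def stair_def spine_def)
  moreover have "card ((?A \<union> ?B) \<union> {i, L}) = card ?A + card ?B + 2"
    using assms by (subst card_Un_disjoint; auto simp: card_Un_disjoint)+
  ultimately show ?thesis
    using assms(5) by (simp add: spine_mismatch_def)
qed

lemma spine_mismatch_Suc:
  assumes "Suc i < L"
  shows "spine_mismatch L y (Suc i) + (if y (Suc i) \<noteq> 0 then 1 else 0)
       = spine_mismatch L y i + (if y i \<noteq> 1 then 1 else 0)"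
proof -
  have "{k. k < Suc i \<and> y k \<noteq> 1} = {k. k < i \<and> y k \<noteq> 1} \<union> (if y i \<noteq> 1 then {i} else {})"
    by (auto simp: less_Suc_eq)
  moreover have "{k. i < k \<and> k < L \<and> y k \<noteq> 0} =
      {k. Suc i < k \<and> k < L \<and> y k \<noteq> 0} \<union> (if y (Suc i) \<noteq> 0 then {Suc i} else {})"
    using assms by (auto intro: Suc_lessI)
  ultimately show ?thesis
    unfolding spine_mismatch_def by (simp add: card_Un_disjoint)
qed

lemma odd_spine_mismatch_iff:
  assumes alternating: "\<And>k. Suc k < L \<Longrightarrow> (y k \<noteq> 1) = (y (Suc k) \<noteq> 0)" and "i < L"
  shows "odd (spine_mismatch L y i) \<longleftrightarrow> odd (spine_mismatch L y 0)"
  using \<open>i < L\<close>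
proof (induction i)
  case (Suc i)
  have "spine_mismatch L y (Suc i) = spine_mismatch L y i"
    using spine_mismatch_Suc[OF Suc.prems, of y] alternating[OF Suc.prems] by (auto split: if_splits)
  then show ?case
    using Suc by simp
qed simp

definition staircase :: "nat \<Rightarrow> (nat \<Rightarrow> nat) \<Rightarrow> (nat \<times> nat) + nat \<Rightarrow> nat \<Rightarrow> nat" where
  "staircase L y = case_sum (\<lambda>(i, a). stair L i a) (spine L y)"

lemma odd_card_disagreements_staircase:
  assumes W: "W \<subseteq> {..<L} \<times> {2..<n}"
    and W_y: "\<And>i a. (i, a) \<in> W \<Longrightarrow> y i \<noteq> a \<and> odd (spine_mismatch L y i)"
    and "p \<in> W <+> {2..<n}" "q \<in> W <+> {2..<n}" "p \<noteq> q"
  shows "odd (card (disagreements (Suc L) (staircase L y p) (staircase L y q)))"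
proof -
  consider (stairs) i a j b where "p = Inl (i, a)" "q = Inl (j, b)" "(i, a) \<in> W" "(j, b) \<in> W"
    | (stair_spine) i a c where "p = Inl (i, a)" "q = Inr c" "(i, a) \<in> W" "c \<in> {2..<n}"
    | (spine_stair) i a c where "p = Inr c" "q = Inl (i, a)" "(i, a) \<in> W" "c \<in> {2..<n}"
    | (spines) c c' where "p = Inr c" "q = Inr c'"
    using assms(3,4) by (elim PlusE) auto
  then show ?thesis
  proof cases
    case stairs
    with W assms(5) have "odd (card (disagreements (Suc L) (stair L i a) (stair L j b)))"
      by (intro odd_card_disagreements_stair) auto
    with stairs show ?thesis
      by (simp add: staircase_def)
  next
    case stair_spine
    with W W_y have "odd (card (disagreements (Suc L) (stair L i a) (spine L y c)))"
      by (intro odd_card_disagreements_stair_spine) auto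
    with stair_spine show ?thesis
      by (simp add: staircase_def)
  next
    case spine_stair
    with W W_y have "odd (card (disagreements (Suc L) (stair L i a) (spine L y c)))"
      by (intro odd_card_disagreements_stair_spine) auto
    with spine_stair show ?thesis
      by (simp add: staircase_def disagreements_commute)
  next
    case spines
    then show ?thesis
      using assms(5) by (auto simp: staircase_def intro!: odd_card_disagreements_spine)
  qed
qed

lemma staircase_xor_clique:
  assumes W: "W \<subseteq> {..<L} \<times> {2..<n}"
    and y: "\<And>k. k < L \<Longrightarrow> y k < n"
    and W_y: "\<And>i a. (i, a) \<in> W \<Longrightarrow> y i \<noteq> a \<and> odd (spine_mismatch L y i)"
  shows "\<exists>C. xor_clique (Suc L) n C \<and> card C = card W + (n - 2)"
proof -
  let ?P = "W <+> {2..<n}"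
  have "staircase L y p k < n" if "p \<in> ?P" "k < Suc L" for p k
    using that W y by (fastforce simp: staircase_def stair_def spine_def)
  moreover have "card ?P = card W + (n - 2)"
    using W finite_subset by (subst card_Plus) auto
  ultimately show ?thesis
    using xor_clique_image_map_upt[of ?P "Suc L" "staircase L y" n]
      odd_card_disagreements_staircase[OF W W_y] by metis
qed

lemma card_odd_less: "card {k. k < L \<and> odd k} = L div 2"
proof (induction L)
  case (Suc L)
  have "{k. k < Suc L \<and> odd k} = {k. k < L \<and> odd k} \<union> (if odd L then {L} else {})"
    by (auto simp: less_Suc_eq)
  then show ?case
    using Suc by (simp add: card_Un_disjoint)
qed simp

lemma card_pos_even_less: "card {k. 0 < k \<and> k < L \<and> even k} = (L - 1) div 2"
proof (induction L)
  case (Suc L)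
  have "{k. 0 < k \<and> k < Suc L \<and> even k} =
      {k. 0 < k \<and> k < L \<and> even k} \<union> (if 0 < L \<and> even L then {L} else {})"
    by (auto simp: less_Suc_eq)
  moreover have "(L - 1) div 2 + (if 0 < L \<and> even L then 1 else 0) = (Suc L - 1) div 2"
    by presburger
  ultimately show ?case
    using Suc by (auto simp: card_Un_disjoint split: if_splits)
qed simp

lemma exists_alternating_spine:
  assumes "2 \<le> L"
  shows "\<exists>y s. s < L \<and> y s \<le> 2 \<and> (\<forall>k. k \<noteq> s \<longrightarrow> y k < 2)
    \<and> (\<forall>k. Suc k < L \<longrightarrow> (y k \<noteq> 1) = (y (Suc k) \<noteq> 0)) \<and> odd (spine_mismatch L y 0)"
proof -
  have mismatch_0: "spine_mismatch L y 0 = card {k. 0 < k \<and> k < L \<and> y k \<noteq> 0}" for y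
    by (simp add: spine_mismatch_def)
  consider "odd (L div 2)" | "even L" "even (L div 2)" | "odd L" "even (L div 2)"
    by blast
  then show ?thesis
  proof cases
    case 1
    let ?y = "\<lambda>k. k mod 2 :: nat"
    have "{k. 0 < k \<and> k < L \<and> ?y k \<noteq> 0} = {k. k < L \<and> odd k}"
      by (auto simp: odd_pos odd_iff_mod_2_eq_one)
    then have "odd (spine_mismatch L ?y 0)"
      using 1 by (simp add: mismatch_0 card_odd_less)
    moreover have "(?y k \<noteq> 1) = (?y (Suc k) \<noteq> 0)" for k
      by presburger
    ultimately show ?thesis
      using assms by (intro exI[of _ ?y] exI[of _ 0]) simp
  next
    case 2
    let ?y = "\<lambda>k. (k + 1) mod 2 :: nat"
    have "{k. 0 < k \<and> k < L \<and> ?y k \<noteq> 0} = {k. 0 < k \<and> k < L \<and> even k}"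
      by (auto; presburger)
    moreover have "odd ((L - 1) div 2)"
      using 2 assms by presburger
    ultimately have "odd (spine_mismatch L ?y 0)"
      by (simp add: mismatch_0 card_pos_even_less)
    moreover have "(?y k \<noteq> 1) = (?y (Suc k) \<noteq> 0)" for k
      by presburger
    ultimately show ?thesis
      using assms by (intro exI[of _ ?y] exI[of _ 0]) simp
  next
    case 3
    \<comment> \<open>No alternating 0/1 sequence has the right parity here; the entry 2 at position 1 repairs it,
      at the cost of the stair tuple with \<open>i = 1\<close>, \<open>a = 2\<close>.\<close>
    let ?y = "\<lambda>k. if k = 1 then 2 else if k = 0 then 0 else (k + 1) mod 2 :: nat"
    have "{k. 0 < k \<and> k < L \<and> ?y k \<noteq> 0} = insert 1 {k. 0 < k \<and> k < L \<and> even k}"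
      using assms by (auto; presburger)
    moreover have "odd (Suc ((L - 1) div 2))"
      using 3 by presburger
    ultimately have "odd (spine_mismatch L ?y 0)"
      by (simp add: mismatch_0 card_pos_even_less)
    moreover have "(?y k \<noteq> 1) = (?y (Suc k) \<noteq> 0)" for k
      by presburger
    ultimately show ?thesis
      using assms by (intro exI[of _ ?y] exI[of _ 1]) simp
  qed
qed

lemma exists_large_xor_clique:
  assumes "3 \<le> l" "3 \<le> n"
  shows "\<exists>C. xor_clique l n C \<and> l * (n - 2) \<le> card C + 1"
proof -
  obtain L where l: "l = Suc L" and "2 \<le> L"
    using assms(1) by (metis Suc_le_D Suc_le_mono numeral_3_eq_3 numeral_2_eq_2)
  obtain y s where "s < L" "y s \<le> 2" and y_small: "\<forall>k. k \<noteq> s \<longrightarrow> y k < 2"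
    and alternating: "\<forall>k. Suc k < L \<longrightarrow> (y k \<noteq> 1) = (y (Suc k) \<noteq> 0)"
    and odd_0: "odd (spine_mismatch L y 0)"
    using exists_alternating_spine[OF \<open>2 \<le> L\<close>] by blast
  let ?W = "{..<L} \<times> {2..<n} - {(s, y s)}"
  have "y i \<noteq> a \<and> odd (spine_mismatch L y i)" if "(i, a) \<in> ?W" for i a
    using that y_small odd_0 odd_spine_mismatch_iff[of L y i] alternating by fastforce
  moreover have "y k < n" for k
    using y_small \<open>y s \<le> 2\<close> assms(2) by (cases "k = s") auto
  ultimately obtain C where C: "xor_clique (Suc L) n C" "card C = card ?W + (n - 2)"
    using staircase_xor_clique[of ?W L n y] by blast
  have "L * (n - 2) \<le> card ?W + 1"
    by (simp add: card_Diff_singleton_if card_cartesian_product)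
  then show ?thesis
    using C l by (intro exI[of _ C]) auto
qed

lemma f_xor_finite_nonempty:
  "finite (card ` {C. xor_clique l n C})" "card ` {C. xor_clique l n C} \<noteq> {}"
proof -
  have "{C. xor_clique l n C} \<subseteq> Pow (xor_vertices l n)"
    by (auto simp: xor_clique_def)
  then show "finite (card ` {C. xor_clique l n C})"
    using finite_xor_vertices finite_subset by blast
  have "xor_clique l n {}"
    by (simp add: xor_clique_def)
  then show "card ` {C. xor_clique l n C} \<noteq> {}"
    by blast
qed

lemma card_le_f_xor: "xor_clique l n C \<Longrightarrow> card C \<le> f_xor l n"
  unfolding f_xor_def using f_xor_finite_nonempty by (simp add: Max_ge)

lemma f_xor_le: "(\<And>C. xor_clique l n C \<Longrightarrow> card C \<le> b) \<Longrightarrow> f_xor l n \<le> b"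
  unfolding f_xor_def using f_xor_finite_nonempty by (simp add: Max_le_iff)

lemma f_xor_upper:
  assumes "0 < l" "0 < n"
  shows "f_xor l n + l \<le> l * n + 1"
proof -
  have "f_xor l n \<le> l * n + 1 - l"
    using assms card_xor_clique_bound by (intro f_xor_le) fastforce
  moreover have "l \<le> l * n"
    using assms by simp
  ultimately show ?thesis
    by linarith
qed

lemma f_xor_lower:
  assumes "3 \<le> l"
  shows "l * (n - 2) \<le> f_xor l n + 1"
proof (cases "3 \<le> n")
  case True
  then obtain C where "xor_clique l n C" "l * (n - 2) \<le> card C + 1"
    using exists_large_xor_clique assms by blast
  then show ?thesis
    using card_le_f_xor[of l n C] by simp
qed simp

theorem theorem1p2:
  fixes l n :: nat
  assumes "l \<ge> 3" and "n \<ge> 1"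
  shows "int l * int n - 2 * int l - 1 \<le> int (f_xor l n)
         \<and> int (f_xor l n) \<le> int l * int n - int l + 1"
proof
  have "int (f_xor l n + l) \<le> int (l * n + 1)"
    using f_xor_upper assms by (simp only: of_nat_le_iff)
  then show "int (f_xor l n) \<le> int l * int n - int l + 1"
    by simp
  show "int l * int n - 2 * int l - 1 \<le> int (f_xor l n)"
  proof (cases "n \<ge> 2")
    case True
    have "int (l * (n - 2)) \<le> int (f_xor l n + 1)"
      using f_xor_lower[OF assms(1)] by (simp only: of_nat_le_iff)
    then have "int l * (int n - 2) \<le> int (f_xor l n) + 1"
      using True by (simp add: of_nat_diff)
    then show ?thesis
      by (simp add: algebra_simps)
  next
    case False
    with assms have "n = 1"
      by simp
    then show ?thesis
      by simp
  qed
qed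

end
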